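(* Let $w>1$ be a fixed-precision binary number represented by $n$ bits, of which the first $m$ correspond to its integer part, and let $b\geq \max\{2m,4\}$. Consider the following algorithm (SQRT), in which every iterate is computed exactly in fixed precision arithmetic and then truncated to $b$ bits after the decimal point before being passed to the next step: if $w=1$ return $1$; otherwise set $\hat{x}_0 = 2^{-p}$, where $p\in\mathbb{N}$ is such that $2^p > w \geq 2^{p-1}$, set $s=\lceil \log_2 b\rceil$, and for $i=1,\dots,s$ compute $x_i = -w\hat{x}_{i-1}^2 + 2\hat{x}_{i-1}$ and let $\hat{x}_i$ be $x_i$ truncated (so $\hat{x}_s\approx 1/w$); then set $\hat{y}_0 = 2^{\lfloor (q-1)/2\rfloor}$, where $q\in\mathbb{N}$ is such that $2^{1-q} > \hat{x}_s \geq 2^{-q}$, and for $j=1,\dots,s$ compute $y_j = \frac{1}{2}(3\hat{y}_{j-1} - \hat{x}_s\hat{y}_{j-1}^3)$ and let $\hat{y}_j$ be $y_j$ truncated; return $\hat{y}_s$. Then the returned value $\hat{y}_s$ approximates $\sqrt{w}$ with error \begin{equation*} |\hat{y}_{s}-\sqrt{w}| \leq \left( \frac{3}{4} \right)^{b-2m} \left( 2+ b + \log_2 b \right). \end{equation*}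
   Context: Numbers are held in fixed precision: an $n$-bit register holding $w=\sum_{j=m-n}^{m-1} w^{(j)}2^j$, with $m$ bits for the integer part and $n-m$ bits for the fractional part. The first stage is Newton's iteration applied to $f_1(x)=\frac{1}{x}-w$ (approximating $1/w$), and the second stage is Newton's iteration applied to $f_2(y)=\frac{1}{y^2}-\hat{x}_s$ (approximating $1/\sqrt{\hat{x}_s}\approx\sqrt{w}$); each step uses only addition and multiplication. *)

theory Defs
  imports "HOL-Analysis.Analysis"
begin

definition trunc_bits :: "nat \<Rightarrow> real \<Rightarrow> real" where
  "trunc_bits b x = sgn x * (real_of_int \<lfloor>\<bar>x\<bar> * 2 ^ b\<rfloor> / 2 ^ b)"

definition fixed_val :: "nat \<Rightarrow> nat \<Rightarrow> (int \<Rightarrow> bool) \<Rightarrow> real" where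
  "fixed_val n m wb = (\<Sum>j\<in>{int m - int n .. int m - 1}. (if wb j then 1 else 0) * 2 powi j)"

fun sqrt_x :: "nat \<Rightarrow> real \<Rightarrow> nat \<Rightarrow> real" where
  "sqrt_x b w 0 = 2 powi (- int (THE p::nat. 2 ^ p > w \<and> w \<ge> 2 powi (int p - 1)))"
| "sqrt_x b w (Suc i) = trunc_bits b (- w * (sqrt_x b w i)^2 + 2 * sqrt_x b w i)"

text \<open>Second stage: Newton iteration for 1/sqrt(xs), with xs = hat x_s.\<close>
fun sqrt_y :: "nat \<Rightarrow> real \<Rightarrow> nat \<Rightarrow> real" where
  "sqrt_y b xs 0 = 2 powi ((int (THE q::nat. 2 powi (1 - int q) > xs \<and> xs \<ge> 2 powi (- int q)) - 1) div 2)"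
| "sqrt_y b xs (Suc j) = trunc_bits b ((3 * sqrt_y b xs j - xs * (sqrt_y b xs j)^3) / 2)"

definition sqrt_steps :: "nat \<Rightarrow> nat" where
  "sqrt_steps b = nat \<lceil>log 2 (real b)\<rceil>"

definition SQRT :: "nat \<Rightarrow> real \<Rightarrow> real" where
  "SQRT b w = (if w = 1 then 1 else
     (let s = sqrt_steps b in sqrt_y b (sqrt_x b w s) s))"

end

theory Submission
  imports Defs
begin

text \<open>Write \<open>e = 1 - w x\<close> for the relative error of the first stage. One Newton step for \<open>1/w\<close>
  squares it exactly, and truncation adds at most \<open>w 2\<^sup>-\<^sup>b\<close>; starting from \<open>e \<le> 1/2\<close> we get
  \<open>e\<^sub>s \<le> (1/2)^(2^s) + s w 2\<^sup>-\<^sup>b\<close>. Likewise, with \<open>u = 1 - X y\<^sup>2\<close>, one Newton step for \<open>1/\<surd>X\<close> maps \<open>u\<close> to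
  \<open>u\<^sup>2 (3 + u)/4 \<le> u\<^sup>2\<close>, truncation adds at most \<open>2 \<surd>X 2\<^sup>-\<^sup>b\<close>, and starting from \<open>u \<le> 3/4\<close> we get
  \<open>u\<^sub>s \<le> (3/4)^(2^s) + O((3/2)^s 2\<^sup>-\<^sup>b)\<close>. Since \<open>y\<^sub>s\<^sup>2 = w (1 - u\<^sub>s)/(1 - e\<^sub>s)\<close>, the final error is
  at most \<open>\<surd>w (u\<^sub>s + e\<^sub>s)\<close>. With \<open>s = \<lceil>log\<^sub>2 b\<rceil>\<close> we have \<open>2^s \<ge> b\<close> and \<open>(3/2)^s + s \<le> b + log\<^sub>2 b\<close>;
  finally \<open>w \<le> 2^m\<close> costs the factor \<open>4^m\<close>, which is absorbed into \<open>(3/4)^(b - 2m)\<close>.\<close>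

lemma trunc_bits_bounds:
  assumes "x \<ge> 0"
  shows "0 \<le> trunc_bits b x" "trunc_bits b x \<le> x" "x - 1 / 2^b < trunc_bits b x"
proof -
  have t: "trunc_bits b x = \<lfloor>x * 2^b\<rfloor> / 2^b"
    using assms by (cases "x = 0") (auto simp: trunc_bits_def)
  have f: "0 \<le> \<lfloor>x * 2^b\<rfloor>" "\<lfloor>x * 2^b\<rfloor> \<le> x * 2^b" "x * 2^b - 1 < \<lfloor>x * 2^b\<rfloor>"
    using assms by auto
  then show "0 \<le> trunc_bits b x" "trunc_bits b x \<le> x"
    unfolding t by (simp_all add: field_simps)
  have "x - 1 / 2^b = (x * 2^b - 1) / 2^b" by (simp add: field_simps)
  also have "\<dots> < trunc_bits b x" unfolding t using f(3) by (simp add: divide_strict_right_mono)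
  finally show "x - 1 / 2^b < trunc_bits b x" .
qed

lemma ex1_powi_bracket:
  fixes z :: real
  assumes "z > 0"
  shows "\<exists>!k::int. 2 powi k \<le> z \<and> z < 2 powi (k + 1)"
proof (rule ex_ex1I)
  define k where "k = \<lfloor>log 2 z\<rfloor>"
  have "2 powi k = 2 powr (real_of_int k)" by (simp add: powr_real_of_int')
  also have "\<dots> \<le> 2 powr (log 2 z)" unfolding k_def by (intro powr_mono) auto
  also have "\<dots> = z" using assms by simp
  finally have "2 powi k \<le> z" .
  have "z = 2 powr (log 2 z)" using assms by simp
  also have "\<dots> < 2 powr (real_of_int (k + 1))" unfolding k_def by (intro powr_less_mono) linarith+
  also have "\<dots> = 2 powi (k + 1)" by (rule powr_real_of_int') auto
  finally show "\<exists>k::int. 2 powi k \<le> z \<and> z < 2 powi (k + 1)"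
    using \<open>2 powi k \<le> z\<close> by blast
next
  fix k k' :: int
  assume k: "2 powi k \<le> z \<and> z < 2 powi (k + 1)" and k': "2 powi k' \<le> z \<and> z < 2 powi (k' + 1)"
  have "\<not> k + 1 \<le> l" if "2 powi l \<le> z" "z < 2 powi (k + 1)" for k l :: int
    using that power_int_increasing[of "k + 1" l "2::real"] by (smt (verit))
  then have "\<not> k + 1 \<le> k'" "\<not> k' + 1 \<le> k" using k k' by blast+
  then show "k = k'" by linarith
qed

lemma sqrt_x_0_error:
  assumes "w > 1"
  shows "0 \<le> 1 - w * sqrt_x b w 0" "1 - w * sqrt_x b w 0 \<le> 1/2"
proof -
  obtain k where k: "2 powi k \<le> w" "w < 2 powi (k + 1)"
    and uniq: "\<And>k'. 2 powi k' \<le> w \<and> w < 2 powi (k' + 1) \<Longrightarrow> k' = k"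
    using ex1_powi_bracket[of w] assms by auto
  have "k \<ge> 0"
  proof (rule ccontr)
    assume "\<not> k \<ge> 0"
    then have "(2::real) powi (k + 1) \<le> 2 powi 0" by (intro power_int_increasing) auto
    then show False using k assms by simp
  qed
  define P where "P = (THE p::nat. 2 ^ p > w \<and> w \<ge> 2 powi (int p - 1))"
  have "\<exists>!p::nat. 2 ^ p > w \<and> w \<ge> 2 powi (int p - 1)"
  proof (rule ex1I[of _ "nat (k + 1)"])
    show "2 ^ nat (k + 1) > w \<and> w \<ge> 2 powi (int (nat (k + 1)) - 1)"
      using k \<open>k \<ge> 0\<close> by (simp add: power_int_nonneg_exp[symmetric])
  next
    fix p :: nat
    assume "2 ^ p > w \<and> w \<ge> 2 powi (int p - 1)"
    then have "int p - 1 = k" by (intro uniq) simp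
    then show "p = nat (k + 1)" by simp
  qed
  then have "2 ^ P > w \<and> w \<ge> 2 powi (int P - 1)"
    unfolding P_def by (rule theI')
  then have P: "2 ^ P > w" "w \<ge> 2 ^ P / 2" by (auto simp: power_int_diff)
  have "sqrt_x b w 0 = 2 powi (- int P)" unfolding P_def by (simp only: sqrt_x.simps)
  then have x0: "sqrt_x b w 0 = 1 / 2 ^ P" by (simp add: power_int_minus_divide)
  show "0 \<le> 1 - w * sqrt_x b w 0" "1 - w * sqrt_x b w 0 \<le> 1/2"
    unfolding x0 using P by (auto simp: field_simps)
qed

lemma sqrt_y_0_error:
  assumes "0 < X" "X < 1"
  shows "0 \<le> 1 - X * (sqrt_y b X 0)^2" "1 - X * (sqrt_y b X 0)^2 \<le> 3/4"
proof -
  obtain k where k: "2 powi k \<le> X" "X < 2 powi (k + 1)"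
    and uniq: "\<And>k'. 2 powi k' \<le> X \<and> X < 2 powi (k' + 1) \<Longrightarrow> k' = k"
    using ex1_powi_bracket[of X] assms by auto
  have "k < 0"
  proof (rule ccontr)
    assume "\<not> k < 0"
    then have "(2::real) powi 0 \<le> 2 powi k" by (intro power_int_increasing) auto
    then show False using k assms by simp
  qed
  define Q where "Q = (THE q::nat. 2 powi (1 - int q) > X \<and> X \<ge> 2 powi (- int q))"
  have "\<exists>!q::nat. 2 powi (1 - int q) > X \<and> X \<ge> 2 powi (- int q)"
  proof (rule ex1I[of _ "nat (- k)"])
    show "2 powi (1 - int (nat (- k))) > X \<and> X \<ge> 2 powi (- int (nat (- k)))"
      using k \<open>k < 0\<close> by (simp add: add.commute)
  next
    fix q :: nat
    assume "2 powi (1 - int q) > X \<and> X \<ge> 2 powi (- int q)"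
    then have "- int q = k" by (intro uniq) (simp add: add.commute)
    then show "q = nat (- k)" by simp
  qed
  then have "2 powi (1 - int Q) > X \<and> X \<ge> 2 powi (- int Q)"
    unfolding Q_def by (rule theI')
  then have Q: "2 powi (1 - int Q) > X" "X \<ge> 2 powi (- int Q)" by auto
  define h where "h = (int Q - 1) div 2"
  have h: "2 * h \<le> int Q - 1" "int Q - 2 \<le> 2 * h" unfolding h_def by linarith+
  have y0: "(sqrt_y b X 0)^2 = 2 powi (2 * h)"
    unfolding h_def Q_def by (simp add: power_int_power' mult.commute)
  have "(2::real) powi (-2) \<le> 2 powi (2 * h - int Q)" using h by (intro power_int_increasing) auto
  also have "\<dots> = 2 powi (- int Q) * 2 powi (2 * h)" by (simp add: power_int_add[symmetric])
  also have "\<dots> \<le> X * 2 powi (2 * h)" using Q by (intro mult_right_mono) auto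
  finally have lo: "1/4 \<le> X * 2 powi (2 * h)" by (simp add: power_int_minus_divide)
  have "X * 2 powi (2 * h) < 2 powi (1 - int Q) * 2 powi (2 * h)"
    using Q by (intro mult_strict_right_mono) auto
  also have "\<dots> = 2 powi (2 * h + 1 - int Q)" by (simp add: power_int_add[symmetric] algebra_simps)
  also have "\<dots> \<le> 2 powi 0" using h by (intro power_int_increasing) auto
  finally have hi: "X * 2 powi (2 * h) < 1" by simp
  show "0 \<le> 1 - X * (sqrt_y b X 0)^2" "1 - X * (sqrt_y b X 0)^2 \<le> 3/4"
    unfolding y0 using lo hi by auto
qed

text \<open>The errors are tracked as \<open>a + D\<close>: the exact part \<open>a\<close> is squared at each step, whereas the
  accumulated truncation error \<open>D\<close> grows only by the factor \<open>1\<close> (resp. \<open>3/2\<close>), because the error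
  itself stays below \<open>1/2\<close> (resp. \<open>3/4\<close>).\<close>

lemma trunc_newton_recip_step:
  fixes w x a D :: real
  assumes w: "w > 0" and wb: "w / 2^b \<le> 1/4"
    and e: "0 \<le> 1 - w * x" "1 - w * x \<le> 1/2" "1 - w * x \<le> a + D"
    and a: "0 \<le> a" "a \<le> 1/2" and D: "D \<ge> 0"
  defines "x' \<equiv> trunc_bits b (- w * x^2 + 2 * x)"
  shows "0 \<le> 1 - w * x'" "1 - w * x' \<le> 1/2" "1 - w * x' \<le> a^2 + D + w / 2^b"
proof -
  define \<epsilon> where "\<epsilon> = 1 - w * x"
  have "w * x \<ge> 0" using e by simp
  then have "x \<ge> 0" using w by (simp add: zero_le_mult_iff)
  have newton: "- w * x^2 + 2 * x = x * (1 + \<epsilon>)"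
    unfolding \<epsilon>_def by (simp add: power2_eq_square algebra_simps)
  then have "- w * x^2 + 2 * x \<ge> 0" using \<open>x \<ge> 0\<close> e \<epsilon>_def by simp
  define d where "d = (- w * x^2 + 2 * x) - x'"
  have d: "0 \<le> d" "d < 1 / 2^b"
    using trunc_bits_bounds[OF \<open>- w * x^2 + 2 * x \<ge> 0\<close>, of b] unfolding d_def x'_def by auto
  have err: "1 - w * x' = \<epsilon>^2 + w * d"
    unfolding d_def \<epsilon>_def by (simp add: power2_eq_square algebra_simps)
  have wd: "0 \<le> w * d" "w * d \<le> w / 2^b"
    using d w by (auto simp: less_imp_le mult_left_mono divide_inverse)
  have "\<epsilon>^2 \<le> 1/4" using e unfolding \<epsilon>_def[symmetric]
    by (simp add: power2_eq_square mult_mono[of \<epsilon> "1/2" \<epsilon> "1/2", simplified])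
  moreover have "\<epsilon>^2 \<le> a^2 + D"
  proof -
    have "\<epsilon>^2 \<le> \<epsilon> * (a + D)" using e unfolding \<epsilon>_def[symmetric] by (simp add: power2_eq_square mult_left_mono)
    also have "\<dots> = \<epsilon> * a + \<epsilon> * D" by (simp add: algebra_simps)
    also have "\<dots> \<le> (a + D) * a + (1/2) * D"
      using e a D unfolding \<epsilon>_def[symmetric] by (intro add_mono mult_right_mono) auto
    also have "\<dots> \<le> a^2 + D"
      using mult_left_mono[OF a(2) D] by (simp add: power2_eq_square algebra_simps)
    finally show ?thesis .
  qed
  ultimately show "0 \<le> 1 - w * x'" "1 - w * x' \<le> 1/2" "1 - w * x' \<le> a^2 + D + w / 2^b"
    using err wd wb zero_le_power2[of \<epsilon>] by linarith+
qed

lemma sqrt_x_error: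
  fixes w :: real
  assumes w: "w > 0" and wb: "w / 2^b \<le> 1/4"
    and e0: "0 \<le> 1 - w * sqrt_x b w 0" "1 - w * sqrt_x b w 0 \<le> 1/2"
  shows "0 \<le> 1 - w * sqrt_x b w i \<and> 1 - w * sqrt_x b w i \<le> 1/2 \<and>
    1 - w * sqrt_x b w i \<le> (1/2)^(2^i) + real i * (w / 2^b)"
proof (induction i)
  case 0
  then show ?case using e0 by simp
next
  case (Suc i)
  have "((1::real)/2)^(2^i) \<le> (1/2)^1" by (rule power_decreasing) auto
  then have a: "0 \<le> ((1::real)/2)^(2^i)" "((1::real)/2)^(2^i) \<le> 1/2" by simp_all
  have "(((1::real)/2)^(2^i))^2 = (1/2)^(2^Suc i)" by (simp add: power_mult[symmetric] mult.commute)
  with trunc_newton_recip_step[OF w wb _ _ _ a, of "sqrt_x b w i" "real i * (w / 2^b)"] Suc.IH w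
  show ?case by (simp add: algebra_simps add_divide_distrib)
qed

lemma trunc_newton_rsqrt_step:
  fixes X y c D \<eta> :: real
  assumes X: "X > 0" and y: "0 \<le> y"
    and u: "0 \<le> 1 - X * y^2" "1 - X * y^2 \<le> 3/4" "1 - X * y^2 \<le> c + D"
    and c: "0 \<le> c" "c \<le> 3/4" and D: "D \<ge> 0"
    and \<eta>: "2 * sqrt X / 2^b \<le> \<eta>" "\<eta> \<le> 1/8"
  defines "y' \<equiv> trunc_bits b ((3 * y - X * y^3) / 2)"
  shows "0 \<le> y'" "0 \<le> 1 - X * y'^2" "1 - X * y'^2 \<le> 3/4"
    "1 - X * y'^2 \<le> c^2 + 3/2 * D + \<eta>"
proof -
  define \<mu> where "\<mu> = 1 - X * y^2"
  define z where "z = (3 * y - X * y^3) / 2"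
  have \<mu>: "0 \<le> \<mu>" "\<mu> \<le> 3/4" "\<mu> \<le> c + D" using u unfolding \<mu>_def by auto
  have newton: "z = y * (2 + \<mu>) / 2"
    unfolding z_def \<mu>_def by (simp add: power2_eq_square power3_eq_cube algebra_simps)
  have "z \<ge> 0" unfolding newton using y \<mu> by simp
  have "X * z^2 = (X * y^2) * (2 + \<mu>)^2 / 4" unfolding newton by (simp add: power2_eq_square)
  then have "X * z^2 = (1 - \<mu>) * (2 + \<mu>)^2 / 4" unfolding \<mu>_def by simp
  then have err_z: "1 - X * z^2 = \<mu>^2 * (3 + \<mu>) / 4" by (simp add: power2_eq_square algebra_simps)
  define d where "d = z - y'"
  have d: "0 \<le> d" "d < 1 / 2^b" "d \<le> z" "0 \<le> y'"
    using trunc_bits_bounds[OF \<open>z \<ge> 0\<close>, of b] unfolding d_def y'_def z_def[symmetric] by auto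
  have err: "1 - X * y'^2 = \<mu>^2 * (3 + \<mu>) / 4 + X * d * (2 * z - d)"
    unfolding d_def err_z[symmetric] by (simp add: power2_eq_square algebra_simps)
  have cubic: "0 \<le> \<mu>^2 * (3 + \<mu>) / 4" "\<mu>^2 * (3 + \<mu>) / 4 \<le> \<mu>^2"
    using \<mu> by (simp_all add: power2_eq_square mult_left_mono[of "3 + \<mu>" 4 "\<mu> * \<mu>"])
  have "\<mu>^2 * (3 + \<mu>) \<le> (3/4)^2 * (15/4)" using \<mu> by (intro mult_mono power_mono) auto
  then have cubic_le: "\<mu>^2 * (3 + \<mu>) / 4 \<le> 135/256" by (simp add: power2_eq_square)
  have "X * z \<le> sqrt X"
  proof -
    have "X * z^2 \<le> 1" using err_z cubic by linarith
    then have "(X * z)^2 \<le> X" using mult_left_mono[of "X * z^2" 1 X] X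
      by (simp add: power2_eq_square mult.assoc mult.left_commute)
    then show ?thesis using X \<open>z \<ge> 0\<close> by (simp add: real_le_rsqrt)
  qed
  then have "X * d * (2 * z - d) \<le> \<eta>"
  proof -
    have "X * d * (2 * z - d) \<le> X * d * (2 * z)" using X d by (simp add: mult_left_mono)
    also have "\<dots> = 2 * (X * z) * d" by simp
    also have "\<dots> \<le> 2 * sqrt X * (1 / 2^b)" using \<open>X * z \<le> sqrt X\<close> d X \<open>z \<ge> 0\<close> by (intro mult_mono) auto
    finally show ?thesis using \<eta> by simp
  qed
  moreover have "0 \<le> X * d * (2 * z - d)" using X d by simp
  moreover have "\<mu>^2 \<le> c^2 + 3/2 * D"
  proof -
    have "\<mu>^2 \<le> \<mu> * (c + D)" using \<mu> by (simp add: power2_eq_square mult_left_mono)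
    also have "\<dots> = \<mu> * c + \<mu> * D" by (simp add: algebra_simps)
    also have "\<dots> \<le> (c + D) * c + (3/4) * D" using \<mu> c D by (intro add_mono mult_right_mono) auto
    also have "\<dots> \<le> c^2 + 3/2 * D"
      using mult_left_mono[OF c(2) D] by (simp add: power2_eq_square algebra_simps)
    finally show ?thesis .
  qed
  ultimately show "0 \<le> y'" "0 \<le> 1 - X * y'^2" "1 - X * y'^2 \<le> 3/4"
    "1 - X * y'^2 \<le> c^2 + 3/2 * D + \<eta>"
    using err d cubic cubic_le \<eta> by linarith+
qed

lemma sqrt_y_error:
  fixes X \<eta> :: real
  assumes X: "X > 0"
    and u0: "0 \<le> 1 - X * (sqrt_y b X 0)^2" "1 - X * (sqrt_y b X 0)^2 \<le> 3/4"
    and \<eta>: "2 * sqrt X / 2^b \<le> \<eta>" "\<eta> \<le> 1/8"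
  shows "0 \<le> sqrt_y b X j \<and> 0 \<le> 1 - X * (sqrt_y b X j)^2 \<and> 1 - X * (sqrt_y b X j)^2 \<le> 3/4 \<and>
    1 - X * (sqrt_y b X j)^2 \<le> (3/4)^(2^j) + 2 * \<eta> * ((3/2)^j - 1)"
proof (induction j)
  case 0
  then show ?case using u0 by simp
next
  case (Suc j)
  have "((3::real)/4)^(2^j) \<le> (3/4)^1" by (rule power_decreasing) auto
  then have c: "0 \<le> ((3::real)/4)^(2^j)" "((3::real)/4)^(2^j) \<le> 3/4" by simp_all
  have "0 \<le> 2 * sqrt X / 2^b" using X by simp
  then have "0 \<le> \<eta>" using \<eta>(1) by linarith
  then have D: "0 \<le> 2 * \<eta> * ((3/2)^j - 1)" by simp
  have "(((3::real)/4)^(2^j))^2 = (3/4)^(2^Suc j)" by (simp add: power_mult[symmetric] mult.commute)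
  moreover have "3/2 * (2 * \<eta> * ((3/2)^j - 1)) + \<eta> = 2 * \<eta> * ((3/2)^(Suc j) - 1)"
    by (simp add: algebra_simps)
  ultimately show ?case
    using trunc_newton_rsqrt_step[OF X _ _ _ _ c D \<eta>, of "sqrt_y b X j"] Suc.IH by auto
qed

lemma abs_sqrt_quotient_sub_one_le:
  fixes u e :: real
  assumes "0 \<le> u" "u \<le> 3/4" "0 \<le> e" "e \<le> 1/2"
  shows "\<bar>sqrt ((1 - u) / (1 - e)) - 1\<bar> \<le> u + e"
proof -
  define r where "r = (1 - u) / (1 - e)"
  have "r \<ge> 0" using assms unfolding r_def by simp
  have "(1 - sqrt r) * (1 + sqrt r) = 1 - r" using \<open>r \<ge> 0\<close> by (simp add: algebra_simps)
  show ?thesis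
  proof (cases "r \<le> 1")
    case True
    then have sr: "0 \<le> sqrt r" "sqrt r \<le> 1" using \<open>r \<ge> 0\<close> by auto
    then have "1 - sqrt r \<le> (1 - sqrt r) * (1 + sqrt r)" by (simp add: mult_le_cancel_left1)
    then have "1 - sqrt r \<le> 1 - r" using \<open>(1 - sqrt r) * (1 + sqrt r) = 1 - r\<close> by simp
    moreover have "1 - r = (u - e) / (1 - e)" unfolding r_def using assms by (simp add: field_simps)
    moreover have "(u - e) / (1 - e) \<le> u" using assms by (simp add: divide_le_eq algebra_simps mult_left_le)
    ultimately show ?thesis unfolding r_def[symmetric] using assms sr by simp
  next
    case False
    then have "sqrt r \<ge> 1" by simp
    then have "(sqrt r - 1) * 2 \<le> (sqrt r - 1) * (sqrt r + 1)" by (intro mult_left_mono) auto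
    then have "2 * (sqrt r - 1) \<le> r - 1" using \<open>(1 - sqrt r) * (1 + sqrt r) = 1 - r\<close>
      by (simp add: algebra_simps)
    moreover have "r - 1 = (e - u) / (1 - e)" unfolding r_def using assms by (simp add: field_simps)
    moreover have "(e - u) / (1 - e) \<le> e / (1/2)" using assms by (intro frac_le) auto
    ultimately show ?thesis unfolding r_def[symmetric] using assms \<open>sqrt r \<ge> 1\<close> by simp
  qed
qed

lemma abs_sub_sqrt_le:
  fixes w X y u e :: real
  assumes "w > 0" "y \<ge> 0" "X * y^2 = 1 - u" "w * X = 1 - e"
    and "0 \<le> u" "u \<le> 3/4" "0 \<le> e" "e \<le> 1/2"
  shows "\<bar>y - sqrt w\<bar> \<le> sqrt w * (u + e)"
proof -
  have "(1 - e) * y^2 = w * (1 - u)" using assms(3,4) by (metis mult.assoc)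
  then have "y^2 = w * ((1 - u) / (1 - e))" using assms(8) by (simp add: field_simps)
  then have "y = sqrt (w * ((1 - u) / (1 - e)))" using \<open>y \<ge> 0\<close> by (metis real_sqrt_unique)
  then have "y = sqrt w * sqrt ((1 - u) / (1 - e))" by (simp only: real_sqrt_mult)
  then have "y - sqrt w = sqrt w * (sqrt ((1 - u) / (1 - e)) - 1)" by (simp add: algebra_simps)
  then have "\<bar>y - sqrt w\<bar> = sqrt w * \<bar>sqrt ((1 - u) / (1 - e)) - 1\<bar>"
    using \<open>w > 0\<close> by (simp add: abs_mult)
  also have "\<dots> \<le> sqrt w * (u + e)"
    using abs_sqrt_quotient_sub_one_le[OF assms(5-8)] by (rule mult_left_mono) (use \<open>w > 0\<close> in simp)
  finally show ?thesis .
qed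

lemma sqrt_steps_bounds:
  assumes "b \<ge> 1"
  shows "log 2 (real b) \<le> real (sqrt_steps b)" "real (sqrt_steps b) < log 2 (real b) + 1"
proof -
  have "log 2 (real b) \<ge> 0" using assms by simp
  then show "log 2 (real b) \<le> real (sqrt_steps b)" "real (sqrt_steps b) < log 2 (real b) + 1"
    unfolding sqrt_steps_def by linarith+
qed

lemma le_two_pow_sqrt_steps:
  assumes "b \<ge> 1"
  shows "b \<le> 2 ^ sqrt_steps b"
proof -
  have "real b = 2 powr log 2 (real b)" using assms by simp
  also have "\<dots> \<le> 2 powr real (sqrt_steps b)"
    using sqrt_steps_bounds[OF assms] by (intro powr_mono) auto
  also have "\<dots> = 2 ^ sqrt_steps b" by (simp add: powr_realpow)
  finally have "real b \<le> real (2 ^ sqrt_steps b)" by simp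
  then show ?thesis by (simp only: of_nat_le_iff)
qed

lemma three_halves_pow_le_two_pow:
  assumes "s \<ge> 3"
  shows "(3/2::real)^s \<le> 2^(s - 1)"
proof -
  obtain t where t: "s = t + 3" using assms by (metis add.commute le_Suc_ex)
  have "(3/2::real)^t \<le> 2^t" by (intro power_mono) auto
  then have "(3/2::real)^t * (27/8) \<le> 2^t * 4" by (intro mult_mono) auto
  then show ?thesis by (simp add: t power_add power3_eq_cube)
qed

lemma three_halves_pow_sqrt_steps_le:
  assumes "b \<ge> 4"
  shows "(3/2::real)^sqrt_steps b + real (sqrt_steps b) \<le> real b + log 2 (real b)"
proof -
  define s where "s = sqrt_steps b"
  define L where "L = log 2 (real b)"
  have "log 2 (4::real) \<le> L" unfolding L_def using assms by (subst log_le_cancel_iff) auto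
  then have "L \<ge> 2" by (simp add: log_def ln_realpow[of 2 2, simplified])
  have s: "L \<le> real s" "real s < L + 1"
    using sqrt_steps_bounds[of b] assms unfolding s_def L_def by auto
  show ?thesis
  proof (cases "s \<le> 2")
    case True
    then have "s = 2" using s \<open>L \<ge> 2\<close> by linarith
    moreover have "(3/2::real)^2 = 9/4" by (simp add: power2_eq_square)
    ultimately show ?thesis using \<open>L \<ge> 2\<close> assms unfolding s_def[symmetric] L_def[symmetric] by simp
  next
    case False
    have "2 powr (real s - 1) < 2 powr L" using s by (intro powr_less_mono) auto
    moreover have "2 powr (real s - 1) = 2^(s - 1)" using False by (simp add: powr_realpow[symmetric] of_nat_diff)
    moreover have "2 powr L = real b" unfolding L_def using assms by simp
    ultimately have "real (2^(s - 1)) < real b" by simp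
    then have "2^(s - 1) + 1 \<le> b" by (simp only: of_nat_less_iff)
    then have "real (2^(s - 1) + 1) \<le> real b" by (simp only: of_nat_le_iff)
    then have "(2::real)^(s - 1) + 1 \<le> real b" by simp
    moreover have "(3/2::real)^s \<le> 2^(s - 1)" using False three_halves_pow_le_two_pow by simp
    ultimately show ?thesis using s unfolding s_def[symmetric] L_def[symmetric] by linarith
  qed
qed

lemma SQRT_error_le:
  fixes w :: real
  assumes w: "w > 1" and wb: "4 * w \<le> 2^b" and b: "b \<ge> 4"
  defines "s \<equiv> sqrt_steps b"
  shows "\<bar>SQRT b w - sqrt w\<bar> \<le>
    sqrt w * (3/4)^b + (3/2)^s * (4 / 2^b) + sqrt w / 2^b + real s * (w * sqrt w / 2^b)"
proof -
  have wb': "w / 2^b \<le> 1/4" using wb by (simp add: divide_le_eq)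
  define X where "X = sqrt_x b w s"
  define e where "e = 1 - w * X"
  have e: "0 \<le> e" "e \<le> 1/2" "e \<le> (1/2)^(2^s) + real s * (w / 2^b)"
    using sqrt_x_error[OF _ wb' sqrt_x_0_error[OF w], of s] w unfolding e_def X_def by auto
  have "X = (1 - e) / w" unfolding e_def using w by simp
  then have X: "0 < X" "X < 1" using e(1,2) w by (simp_all add: divide_less_eq)
  define \<eta> where "\<eta> = 2 * sqrt X / 2^b"
  have "(16::real) \<le> 2^b" using power_increasing[OF b, of "2::real"] by simp
  moreover have "sqrt X \<le> 1" using X by simp
  ultimately have "2 * sqrt X \<le> 2^b / 8" by linarith
  then have "\<eta> \<le> 1/8" unfolding \<eta>_def by (simp add: divide_le_eq)
  define y where "y = sqrt_y b X s"
  define u where "u = 1 - X * y^2"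
  have u: "0 \<le> y" "0 \<le> u" "u \<le> 3/4" "u \<le> (3/4)^(2^s) + 2 * \<eta> * ((3/2)^s - 1)"
    using sqrt_y_error[OF X(1) sqrt_y_0_error[OF X] _ \<open>\<eta> \<le> 1/8\<close>, where j = s]
    unfolding u_def y_def \<eta>_def by auto
  have "SQRT b w = y" using w unfolding SQRT_def y_def X_def s_def by (simp add: Let_def)
  then have err: "\<bar>SQRT b w - sqrt w\<bar> \<le> sqrt w * (u + e)"
    using abs_sub_sqrt_le[of w y X u e] w u e unfolding u_def e_def by simp
  have "b \<le> 2^s" using le_two_pow_sqrt_steps b unfolding s_def by simp
  then have "(3/4::real)^(2^s) \<le> (3/4)^b" "(1/2::real)^(2^s) \<le> (1/2)^b"
    by (auto intro: power_decreasing)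
  then have "u + e \<le> (3/4)^b + 2 * \<eta> * ((3/2)^s - 1) + (1/2)^b + real s * (w / 2^b)"
    using u e by linarith
  then have "sqrt w * (u + e) \<le>
      sqrt w * ((3/4)^b + 2 * \<eta> * ((3/2)^s - 1) + (1/2)^b + real s * (w / 2^b))"
    by (rule mult_left_mono) (use w in simp)
  also have "\<dots> =
      sqrt w * (3/4)^b + 2 * (sqrt w * \<eta>) * ((3/2)^s - 1) + sqrt w / 2^b + real s * (w * sqrt w / 2^b)"
    by (simp add: algebra_simps power_one_over)
  finally have main: "sqrt w * (u + e) \<le> \<dots>" .
  have "sqrt w * \<eta> \<le> 2 / 2^b"
  proof -
    have "sqrt w * sqrt X = sqrt (1 - e)" unfolding e_def by (simp flip: real_sqrt_mult)
    also have "\<dots> \<le> 1" using e by simp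
    finally show ?thesis unfolding \<eta>_def by (simp add: divide_le_eq)
  qed
  then have "2 * (sqrt w * \<eta>) * ((3/2)^s - 1) \<le> 2 * (2 / 2^b) * ((3/2)^s - 1)"
    by (intro mult_right_mono mult_left_mono) auto
  also have "\<dots> \<le> (3/2)^s * (4 / 2^b)" by (simp add: field_simps)
  finally show ?thesis using err main by linarith
qed

lemma sum_two_powi_consecutive:
  "(\<Sum>j\<in>{a - int n .. a - 1}. (2::real) powi j) = 2 powi a - 2 powi (a - int n)"
proof (induction n)
  case 0
  then show ?case by simp
next
  case (Suc n)
  have "{a - int (Suc n) .. a - 1} = insert (a - int (Suc n)) {a - int n .. a - 1}" by auto
  then have "(\<Sum>j\<in>{a - int (Suc n) .. a - 1}. (2::real) powi j)
      = 2 powi (a - int (Suc n)) + (\<Sum>j\<in>{a - int n .. a - 1}. 2 powi j)" by simp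
  also have "(2::real) powi (a - int n) = 2 powi (a - int (Suc n)) * 2"
    by (simp flip: power_int_add_1)
  ultimately show ?case using Suc.IH by simp
qed

lemma fixed_val_le: "fixed_val n m wb \<le> 2 ^ m"
proof -
  have "fixed_val n m wb \<le> (\<Sum>j\<in>{int m - int n .. int m - 1}. (2::real) powi j)"
    unfolding fixed_val_def by (intro sum_mono) auto
  also have "\<dots> = 2 powi (int m) - 2 powi (int m - int n)" by (rule sum_two_powi_consecutive)
  also have "\<dots> \<le> 2 ^ m" by simp
  finally show ?thesis .
qed

lemma div_two_pow_le_three_quarters_pow:
  fixes c :: real
  assumes "c \<le> 4^m" "2 * m \<le> b"
  shows "c / 2^b \<le> (3/4)^(b - 2 * m)"
proof -
  have "(2::real)^b = 2^(b - 2 * m) * (2^2)^m"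
    unfolding power_mult[symmetric] power_add[symmetric] using assms(2) by simp
  then have "c / 2^b \<le> (1/2)^(b - 2 * m)" using assms(1) by (simp add: power_one_over divide_le_eq)
  also have "\<dots> \<le> (3/4)^(b - 2 * m)" by (intro power_mono) auto
  finally show ?thesis .
qed

lemma sqrt_bounds_four_pow:
  fixes w :: real
  assumes "1 \<le> w" "w \<le> 2^m"
  shows "sqrt w \<le> 4^m" "w * sqrt w \<le> 4^m"
proof -
  have "sqrt w \<le> w" using assms(1) by (intro real_le_lsqrt) (auto simp: power2_eq_square)
  moreover have "(2::real)^m \<le> 4^m" by (intro power_mono) auto
  ultimately show "sqrt w \<le> 4^m" using assms(2) by linarith
  have "w * sqrt w \<le> 2^m * 2^m" using \<open>sqrt w \<le> w\<close> assms by (intro mult_mono) auto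
  then show "w * sqrt w \<le> 4^m" by (simp flip: power_mult_distrib)
qed

lemma sqrt_mult_three_quarters_pow_le:
  fixes w :: real
  assumes "0 \<le> w" "w \<le> 2^m" "2 * m \<le> b"
  shows "sqrt w * (3/4)^b \<le> (3/4)^(b - 2 * m)"
proof -
  have "w \<le> ((16/9)^m)^2"
  proof -
    have "(2::real)^m \<le> (256/81)^m" by (intro power_mono) auto
    also have "\<dots> = ((16/9)^m)^2" by (simp add: power2_eq_square flip: power_mult_distrib)
    finally show ?thesis using assms(2) by linarith
  qed
  then have "sqrt w \<le> (16/9)^m" by (simp add: real_le_lsqrt)
  then have "sqrt w * (3/4)^b \<le> (16/9)^m * (3/4)^b" by (simp add: mult_right_mono)
  also have "(16/9::real)^m * (3/4)^b = (16/9)^m * ((3/4)^(b - 2 * m) * ((3/4)^2)^m)"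
    unfolding power_mult[symmetric] power_add[symmetric] using assms(3) by simp
  also have "\<dots> = (3/4::real)^(b - 2 * m)"
    by (simp add: power2_eq_square mult.commute mult.left_commute flip: power_mult_distrib)
  finally show ?thesis .
qed

theorem theorem1:
  fixes n m b :: nat and wb :: "int \<Rightarrow> bool" and w :: real
  assumes "m \<le> n"
    and "w = fixed_val n m wb"
    and "w > 1"
    and "b \<ge> max (2 * m) 4"
  shows "\<bar>SQRT b w - sqrt w\<bar> \<le> (3/4) ^ (b - 2 * m) * (2 + real b + log 2 (real b))"
proof -
  define A where "A = (3/4::real) ^ (b - 2 * m)"
  define s where "s = sqrt_steps b"
  have w: "1 < w" "w \<le> 2^m" using assms(2,3) fixed_val_le by auto
  then have "m \<ge> 1" by (cases m) auto
  have b: "4 \<le> b" "2 * m \<le> b" using assms(4) by auto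
  have "4 * w \<le> 2^(m + 2)" using w by simp
  also have "\<dots> \<le> 2^b" using b \<open>m \<ge> 1\<close> by (intro power_increasing) auto
  finally have err: "\<bar>SQRT b w - sqrt w\<bar> \<le>
      sqrt w * (3/4)^b + (3/2)^s * (4 / 2^b) + sqrt w / 2^b + real s * (w * sqrt w / 2^b)"
    using SQRT_error_le[OF w(1) _ b(1)] unfolding s_def by simp
  have "(4::real) \<le> 4^m" using power_increasing[of 1 m "4::real"] \<open>m \<ge> 1\<close> by simp
  then have "4 / 2^b \<le> A" "sqrt w / 2^b \<le> A" "w * sqrt w / 2^b \<le> A"
    using sqrt_bounds_four_pow[of w m] w b(2) unfolding A_def by (auto intro: div_two_pow_le_three_quarters_pow)
  then have "(3/2)^s * (4 / 2^b) \<le> (3/2)^s * A" "real s * (w * sqrt w / 2^b) \<le> real s * A"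
    by (intro mult_left_mono; simp)+
  moreover have "sqrt w * (3/4)^b \<le> A"
    unfolding A_def using w b by (intro sqrt_mult_three_quarters_pow_le) auto
  ultimately have "\<bar>SQRT b w - sqrt w\<bar> \<le> A + (3/2)^s * A + A + real s * A"
    using err \<open>sqrt w / 2^b \<le> A\<close> by linarith
  also have "\<dots> = A * (2 + (3/2)^s + real s)" by (simp add: algebra_simps)
  also have "\<dots> \<le> A * (2 + real b + log 2 (real b))"
    using three_halves_pow_sqrt_steps_le[OF b(1)] unfolding A_def s_def by (intro mult_left_mono) auto
  finally show ?thesis unfolding A_def .
qed

end
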